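(* Let $\mathsf K\in\{\mathsf O,\mathsf{Sp}\}$ and $z\in I_n$. Then $MX^{\mathsf K}_z=\{A\in\mathsf{Mat}^{\mathsf K}_n:\operatorname{rank}(A_{[i][j]})\le\operatorname{rank}(z_{[i][j]})\text{ for all }(i,j)\in\operatorname{Ess}(D^{\mathsf O}(z))\}.$ Moreover, if $n$ is even and $z\in I^{\mathsf{FPF}}_n$ then $MX^{\mathsf{Sp}}_z=\{A\in\mathsf{Mat}^{\mathsf{Sp}}_n:\operatorname{rank}(A_{[i][j]})\le\operatorname{rank}(z_{[i][j]})\text{ for all }(i,j)\in\operatorname{Ess}(D^{\mathsf{Sp}}(z))\}.$
   Context: $I_n$ (resp. $I^{\mathsf{FPF}}_n$) is the set of involutions (resp. fixed-point-free involutions) in $S_n$; $z$ is identified with its permutation matrix with $1$'s at $(i,z(i))$; $A_{[i][j]}$ is the upper-left $i\times j$ submatrix. $\mathsf{Mat}^{\mathsf O}_n$ (resp. $\mathsf{Mat}^{\mathsf{Sp}}_n$) is the space of complex symmetric (resp. skew-symmetric) $n\times n$ matrices, and $MX^{\mathsf K}_z=\{A\in\mathsf{Mat}^{\mathsf K}_n:\operatorname{rank}(A_{[i][j]})\le\operatorname{rank}(z_{[i][j]})\ \forall i,j\in[n]\}$. The orthogonal Rothe diagram is $D^{\mathsf O}(z)=\{(i,z(j)):(i,j)\in[n]^2,\ z(i)>z(j)\le i<j\}$ and the symplectic Rothe diagram is $D^{\mathsf{Sp}}(z)=\{(i,z(j)):(i,j)\in[n]^2,\ z(i)>z(j)<i<j\}$.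 For $D\subseteq\mathbb{P}\times\mathbb{P}$, $\operatorname{Ess}(D)=\{(i,j)\in D:(i,j+1)\notin D,\ (i+1,j)\notin D\}$. *)

theory Defs
  imports "Jordan_Normal_Form.DL_Rank" "Jordan_Normal_Form.DL_Submatrix"
begin

text \<open>Indices follow the paper: [n] = {1..n}. A permutation z of [n] is a function
  nat => nat that permutes {1..n} (and is the identity elsewhere). Matrices are
  Jordan_Normal_Form matrices whose (0-based) entry (a,b) is the paper's entry (a+1,b+1).\<close>

definition involutions :: "nat \<Rightarrow> (nat \<Rightarrow> nat) set" where
  "involutions n = {z. z permutes {1..n} \<and> (\<forall>i. z (z i) = i)}"

definition fpf_involutions :: "nat \<Rightarrow> (nat \<Rightarrow> nat) set" where
  "fpf_involutions n = {z \<in> involutions n. \<forall>i\<in>{1..n}. z i \<noteq> i}"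

definition perm_mat :: "nat \<Rightarrow> (nat \<Rightarrow> nat) \<Rightarrow> complex mat" where
  "perm_mat n z = mat n n (\<lambda>(a,b). if z (a+1) = b+1 then 1 else 0)"

definition ul_sub :: "'a mat \<Rightarrow> nat \<Rightarrow> nat \<Rightarrow> 'a mat" where
  "ul_sub A i j = submatrix A {0..<i} {0..<j}"

definition crank :: "complex mat \<Rightarrow> nat" where
  "crank A = vec_space.rank (dim_row A) A"

datatype ktype = KO | KSp

definition Mat_K :: "ktype \<Rightarrow> nat \<Rightarrow> complex mat set" where
  "Mat_K K n = {A \<in> carrier_mat n n.
     (case K of KO \<Rightarrow> transpose_mat A = A | KSp \<Rightarrow> transpose_mat A = - A)}"

definition MX :: "ktype \<Rightarrow> nat \<Rightarrow> (nat \<Rightarrow> nat) \<Rightarrow> complex mat set" where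
  "MX K n z = {A \<in> Mat_K K n. \<forall>i\<in>{1..n}. \<forall>j\<in>{1..n}.
       crank (ul_sub A i j) \<le> crank (ul_sub (perm_mat n z) i j)}"

definition D_O :: "nat \<Rightarrow> (nat \<Rightarrow> nat) \<Rightarrow> (nat \<times> nat) set" where
  "D_O n z = {(i, z j) | i j. i \<in> {1..n} \<and> j \<in> {1..n} \<and> z i > z j \<and> z j \<le> i \<and> i < j}"

definition D_Sp :: "nat \<Rightarrow> (nat \<Rightarrow> nat) \<Rightarrow> (nat \<times> nat) set" where
  "D_Sp n z = {(i, z j) | i j. i \<in> {1..n} \<and> j \<in> {1..n} \<and> z i > z j \<and> z j < i \<and> i < j}"

definition Ess :: "(nat \<times> nat) set \<Rightarrow> (nat \<times> nat) set" where
  "Ess D = {(i,j) \<in> D. (i, j+1) \<notin> D \<and> (i+1, j) \<notin> D}"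

end

theory Submission
  imports Defs
begin

(*
  Write r_A(i, j) for the rank of the upper-left i x j block of A, and
  r_z(i, j) = #{k <= i. z k <= j} for that of the permutation matrix of z.
  Adding a row or a column raises r_A by at most one, whereas r_z(i, j) grows
  by one exactly when z i <= j, resp. z j <= i. Hence r_A <= r_z propagates from
  smaller indices to every cell outside the region {(i, j). j < z i, i < z j},
  and inside this region r_z is constant along the rows and columns of a diagram
  contained in it, so a bound on Ess D spreads over all of D. For symmetric and
  skew-symmetric A both r_A and r_z are symmetric in (i, j), so only the part of
  the region on or below the diagonal matters, which is the orthogonal diagram.
  The symplectic diagram misses the diagonal cells (i, i); there
  r_A(i, i) <= r_z(i, i) + 1 follows from the cell (i, i - 1), and parity closes
  the gap: leading principal blocks of a skew-symmetric matrix have even rank,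
  and r_z(i, i) is even when z has no fixed points.
*)

section \<open>Column rank\<close>

context vec_space
begin

lemma cols_carrier_vec:
  assumes "A \<in> carrier_mat n k"
  shows "set (cols A) \<subseteq> carrier_vec n"
  using cols_dim[of A] assms by simp

lemma exists_basis_of_cols:
  assumes A: "A \<in> carrier_mat n k"
  obtains U where "U \<subseteq> set (cols A)" "lin_indpt U" "set (cols A) \<subseteq> span U" "rank A = card U"
proof -
  have "lin_indpt {}" unfolding lin_dep_def by auto
  then obtain S where S: "maximal S (\<lambda>T. T \<subseteq> set (cols A) \<and> lin_indpt T)"
    using maximal_exists_superset[of "set (cols A)" "\<lambda>T. T \<subseteq> set (cols A) \<and> lin_indpt T" "{}"]
    by auto
  then have S_cols: "S \<subseteq> set (cols A)" and S_indpt: "lin_indpt S" unfolding maximal_def by auto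
  have cols_carrier: "set (cols A) \<subseteq> carrier_vec n" using cols_carrier_vec[OF A] .
  then have S_carrier: "S \<subseteq> carrier_vec n" using S_cols by blast
  have "set (cols A) \<subseteq> span S"
  proof
    fix c assume c: "c \<in> set (cols A)"
    show "c \<in> span S"
    proof (rule ccontr)
      assume c_notin: "c \<notin> span S"
      then have "c \<notin> S" using in_own_span[OF S_carrier] by blast
      then have "lin_indpt (S \<union> {c})"
        using lin_dep_iff_in_span[OF S_carrier S_indpt] c_notin c cols_carrier by auto
      then have "S \<union> {c} = S" using S S_cols c unfolding maximal_def by auto
      with \<open>c \<notin> S\<close> show False by auto
    qed
  qed
  with that S_cols S_indpt rank_card_indpt[OF A S] show ?thesis by blast
qed

lemma rank_le_card_spanning:
  assumes A: "A \<in> carrier_mat n k" and T: "finite T" "T \<subseteq> carrier_vec n"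
    and span: "set (cols A) \<subseteq> span T"
  shows "rank A \<le> card T"
proof -
  obtain U where U: "U \<subseteq> set (cols A)" "lin_indpt U" "set (cols A) \<subseteq> span U" "rank A = card U"
    by (rule exists_basis_of_cols[OF A])
  have "finite U" using U(1) by (rule finite_subset) simp
  moreover have "U \<subseteq> span T" using U(1) span by blast
  ultimately have "int (card U) \<le> int (card T)"
    using replacement[OF _ T(1) T(2) U(2)] by fastforce
  with U(4) show ?thesis by simp
qed

lemma rank_mono_col_space:
  assumes A: "A \<in> carrier_mat n k" and B: "B \<in> carrier_mat n l"
    and sub: "set (cols A) \<subseteq> col_space B"
  shows "rank A \<le> rank B"
proof -
  obtain U where U: "U \<subseteq> set (cols B)" "lin_indpt U" "set (cols B) \<subseteq> span U" "rank B = card U"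
    by (rule exists_basis_of_cols[OF B])
  have U_carrier: "U \<subseteq> carrier_vec n" using U(1) cols_carrier_vec[OF B] by blast
  have "col_space B \<subseteq> span U"
    unfolding col_space_def using span_subsetI[OF U_carrier U(3)] .
  with sub have "set (cols A) \<subseteq> span U" by blast
  moreover have "finite U" using U(1) by (rule finite_subset) simp
  ultimately show ?thesis using rank_le_card_spanning[OF A _ U_carrier] U(4) by simp
qed

lemma rank_mult_le:
  assumes B: "B \<in> carrier_mat n l" and Y: "Y \<in> carrier_mat l k"
  shows "rank (B * Y) \<le> rank B"
proof (rule rank_mono_col_space[OF mult_carrier_mat[OF B Y] B], rule subsetI)
  fix c assume "c \<in> set (cols (B * Y))"
  then obtain j where j: "j < k" "c = col (B * Y) j"
    using B Y by (auto simp: cols_def)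
  then have "c = B *\<^sub>v col Y j" by (simp only: col_mult2[OF B Y])
  with j B Y show "c \<in> col_space B" by (auto simp: col_space_eq[OF B])
qed

lemma rank_insert_col:
  assumes A: "A \<in> carrier_mat n k" and B: "B \<in> carrier_mat n l" and v: "v \<in> carrier_vec n"
    and cols_B: "set (cols B) = insert v (set (cols A))"
  shows "rank B = rank A + (if v \<in> col_space A then 0 else 1)"
proof (cases "v \<in> col_space A")
  case True
  have "set (cols A) \<subseteq> col_space A" "set (cols B) \<subseteq> col_space B"
    unfolding col_space_def using in_own_span cols_carrier_vec[OF A] cols_carrier_vec[OF B] by auto
  with True cols_B have "set (cols B) \<subseteq> col_space A" "set (cols A) \<subseteq> col_space B" by auto
  with True show ?thesis using rank_mono_col_space[OF A B] rank_mono_col_space[OF B A] by simp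
next
  case False
  obtain U where U: "U \<subseteq> set (cols A)" "lin_indpt U" "set (cols A) \<subseteq> span U" "rank A = card U"
    by (rule exists_basis_of_cols[OF A])
  have U_carrier: "U \<subseteq> carrier_vec n" using U(1) cols_carrier_vec[OF A] by blast
  have fin: "finite U" using U(1) by (rule finite_subset) simp
  have "span U \<subseteq> col_space A" unfolding col_space_def using span_is_monotone[OF U(1)] .
  with False have v_notin: "v \<notin> span U" by blast
  then have "v \<notin> U" using in_own_span[OF U_carrier] by blast
  have vU_carrier: "insert v U \<subseteq> carrier_vec n" using U_carrier v by blast
  have "lin_indpt (insert v U)"
    using lin_dep_iff_in_span[OF U_carrier U(2) v \<open>v \<notin> U\<close>] v_notin by simp
  moreover have "insert v U \<subseteq> set (cols B)" using U(1) cols_B by blast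
  ultimately have "card (insert v U) \<le> rank B" using rank_ge_card_indpt[OF B] by blast
  moreover have "span U \<subseteq> span (insert v U)" by (rule span_is_monotone) blast
  then have "set (cols B) \<subseteq> span (insert v U)"
    using cols_B U(3) in_own_span[OF vU_carrier] by blast
  then have "rank B \<le> card (insert v U)" using rank_le_card_spanning[OF B _ vU_carrier] fin by simp
  ultimately show ?thesis using False U(4) fin \<open>v \<notin> U\<close> by simp
qed

lemma rank_eq_card_unit_vecs:
  assumes A: "A \<in> carrier_mat n k" and U: "U \<subseteq> set (unit_vecs n)"
    and U_cols: "U \<subseteq> set (cols A)" and cols_U: "set (cols A) \<subseteq> insert (0\<^sub>v n) U"
  shows "rank A = card U"
proof (rule antisym)
  have U_carrier: "U \<subseteq> carrier_vec n" using U by (auto simp: unit_vecs_def)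
  have "finite U" using U by (rule finite_subset) simp
  moreover have "0\<^sub>v n \<in> span U" using span_is_monotone[of "{}" U] span_empty by auto
  then have "set (cols A) \<subseteq> span U" using cols_U in_own_span[OF U_carrier] by blast
  ultimately show "rank A \<le> card U" using rank_le_card_spanning[OF A _ U_carrier] by simp
  have "lin_indpt U" using subset_li_is_li[OF _ U] unit_vecs_basis unfolding basis_def by blast
  then show "card U \<le> rank A" using rank_ge_card_indpt[OF A U_cols] by blast
qed

lemma factor_through_col_space:
  assumes A: "A \<in> carrier_mat n k" and C: "C \<in> carrier_mat n r"
    and sub: "set (cols A) \<subseteq> col_space C"
  obtains R where "R \<in> carrier_mat r k" "A = C * R"
proof -
  have "\<forall>j<k. \<exists>x\<in>carrier_vec r. C *\<^sub>v x = col A j"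
  proof (intro allI impI)
    fix j assume "j < k"
    then have "col A j \<in> set (cols A)" using A by (simp add: cols_def)
    with sub C show "\<exists>x\<in>carrier_vec r. C *\<^sub>v x = col A j" unfolding col_space_eq[OF C] by auto
  qed
  then obtain x where x: "\<And>j. j < k \<Longrightarrow> x j \<in> carrier_vec r \<and> C *\<^sub>v x j = col A j"
    by metis
  define R where "R = mat r k (\<lambda>(a, b). x b $ a)"
  have col_R: "col R j = x j" if "j < k" for j
    using x[OF that] that unfolding R_def by (intro eq_vecI) auto
  have A_eq: "A = C * R"
  proof (rule eq_matI)
    fix i j assume i: "i < dim_row (C * R)" and j: "j < dim_col (C * R)"
    then have "(C * R) $$ (i, j) = (C *\<^sub>v col R j) $ i" by simp
    also have "\<dots> = A $$ (i, j)" using i j x A C col_R by (simp add: R_def)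
    finally show "A $$ (i, j) = (C * R) $$ (i, j)" ..
  qed (use A C R_def in auto)
  show ?thesis by (rule that[OF _ A_eq]) (simp add: R_def)
qed

lemma rank_transpose_le:
  assumes A: "A \<in> carrier_mat n k"
  shows "vec_space.rank k A\<^sup>T \<le> rank A"
proof -
  obtain U where U: "U \<subseteq> set (cols A)" "lin_indpt U" "set (cols A) \<subseteq> span U" "rank A = card U"
    by (rule exists_basis_of_cols[OF A])
  have "finite U" using U(1) by (rule finite_subset) simp
  then obtain us where us: "set us = U" "distinct us" using finite_distinct_list by blast
  then have card_U: "card U = length us" using distinct_card by fastforce
  define C where "C = mat_of_cols n us"
  have C: "C \<in> carrier_mat n (length us)" unfolding C_def by simp
  have "set us \<subseteq> carrier_vec n" using us(1) U(1) cols_carrier_vec[OF A] by blast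
  then have "set (cols C) = U" unfolding C_def using us(1) by simp
  with U(3) have "set (cols A) \<subseteq> col_space C" unfolding col_space_def by simp
  then obtain R where R: "R \<in> carrier_mat (length us) k" and "A = C * R"
    by (rule factor_through_col_space[OF A C])
  then have "A\<^sup>T = R\<^sup>T * C\<^sup>T" using transpose_mult[OF C R] by simp
  then have "vec_space.rank k A\<^sup>T \<le> vec_space.rank k R\<^sup>T"
    using vec_space.rank_mult_le[of "R\<^sup>T" k "length us" "C\<^sup>T" n] R C by simp
  also have "\<dots> \<le> length us" using vec_space.rank_le_nc[of "R\<^sup>T" k "length us"] R by simp
  also have "\<dots> = rank A" using U(4) card_U by simp
  finally show ?thesis .
qed

end

lemma rank_transpose:
  fixes A :: "'a::field mat"
  assumes A: "A \<in> carrier_mat m k"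
  shows "vec_space.rank k A\<^sup>T = vec_space.rank m A"
  using vec_space.rank_transpose_le[OF A] vec_space.rank_transpose_le[of "A\<^sup>T" k m] A
  by (simp add: le_antisym)

lemma rank_uminus:
  fixes A :: "'a::field mat"
  assumes A: "A \<in> carrier_mat m k"
  shows "vec_space.rank m (- A) = vec_space.rank m A"
proof -
  have le: "vec_space.rank m (- B) \<le> vec_space.rank m B" if B: "B \<in> carrier_mat m k" for B
  proof -
    have "vec_space.rank m (B * (- 1\<^sub>m k)) \<le> vec_space.rank m B"
      by (rule vec_space.rank_mult_le[OF B, of _ k]) simp
    moreover have "B * (- 1\<^sub>m k) = - B" using B by simp
    ultimately show ?thesis by simp
  qed
  show ?thesis using le[OF A] le[of "- A"] A by (simp add: le_antisym)
qed

section \<open>Ranks of upper-left blocks\<close>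

text \<open>Unlike ul_sub, which truncates at the size of the matrix, ul_block A i j is always
  an i x j matrix.\<close>

definition ul_block :: "'a mat \<Rightarrow> nat \<Rightarrow> nat \<Rightarrow> 'a mat" where
  "ul_block A i j = mat i j (\<lambda>(a, b). A $$ (a, b))"

lemma ul_block_carrier [simp]: "ul_block A i j \<in> carrier_mat i j"
  and dim_ul_block [simp]: "dim_row (ul_block A i j) = i" "dim_col (ul_block A i j) = j"
  and index_ul_block [simp]: "a < i \<Longrightarrow> b < j \<Longrightarrow> ul_block A i j $$ (a, b) = A $$ (a, b)"
  unfolding ul_block_def by auto

lemma ul_sub_eq_ul_block:
  assumes "i \<le> dim_row A" "j \<le> dim_col A"
  shows "ul_sub A i j = ul_block A i j"
proof -
  have rows: "{a. a < dim_row A \<and> a \<in> {0..<i}} = {0..<i}"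
    and cols: "{b. b < dim_col A \<and> b \<in> {0..<j}} = {0..<j}" using assms by auto
  have pick_id: "pick {0..<m} a = a" if "a < m" for a m
  proof -
    have "{x \<in> {0..<m}. x < a} = {0..<a}" using that by auto
    then have "card {x \<in> {0..<m}. x < a} = a" by simp
    then show ?thesis using pick_card_in_set[of a "{0..<m}"] that by simp
  qed
  show ?thesis unfolding ul_sub_def submatrix_def ul_block_def rows cols
    by (intro eq_matI) (auto simp: pick_id)
qed

lemma transpose_ul_block:
  assumes "i \<le> dim_row A" "j \<le> dim_col A"
  shows "(ul_block A i j)\<^sup>T = ul_block A\<^sup>T j i"
  using assms by (intro eq_matI) auto

lemma ul_block_mult_vec_index:
  assumes "a < i" "x \<in> carrier_vec j"
  shows "(ul_block A i j *\<^sub>v x) $ a = (\<Sum>b<j. A $$ (a, b) * x $ b)"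
  using assms by (simp add: scalar_prod_def atLeast0LessThan)

abbreviation block_rank :: "'a::field mat \<Rightarrow> nat \<Rightarrow> nat \<Rightarrow> nat" where
  "block_rank A i j \<equiv> vec_space.rank i (ul_block A i j)"

lemma block_rank_transpose:
  assumes "i \<le> dim_row A" "j \<le> dim_col A"
  shows "block_rank A\<^sup>T j i = block_rank A i j"
  using rank_transpose[of "ul_block A i j" i j] transpose_ul_block[OF assms] by simp

lemma ul_block_uminus:
  assumes "i \<le> dim_row A" "j \<le> dim_col A"
  shows "ul_block (- A) i j = - ul_block A i j"
  using assms by (intro eq_matI) auto

lemma block_rank_uminus:
  assumes "i \<le> dim_row A" "j \<le> dim_col A"
  shows "block_rank (- A) i j = block_rank A i j"
  using rank_uminus[of "ul_block A i j" i j] ul_block_uminus[OF assms] by simp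

lemma block_rank_swap:
  assumes A: "A \<in> carrier_mat n n" and sym: "A\<^sup>T = A \<or> A\<^sup>T = - A" and "i \<le> n" "j \<le> n"
  shows "block_rank A j i = block_rank A i j"
proof -
  have "block_rank A\<^sup>T j i = block_rank A i j" by (rule block_rank_transpose) (use assms in auto)
  moreover have "block_rank A\<^sup>T j i = block_rank A j i"
    using sym block_rank_uminus[of j A i] assms by auto
  ultimately show ?thesis by simp
qed

lemma block_rank_0_col [simp]: "block_rank A i 0 = 0"
  using vec_space.rank_le_nc[of "ul_block A i 0" i 0] by simp

lemma block_rank_0_row [simp]: "block_rank A 0 j = 0"
proof -
  have "block_rank A 0 j = vec_space.rank j (ul_block A 0 j)\<^sup>T"
    using rank_transpose[of "ul_block A 0 j" 0 j] by simp
  also have "\<dots> \<le> 0" using vec_space.rank_le_nc[of "(ul_block A 0 j)\<^sup>T" j 0] by simp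
  finally show ?thesis by simp
qed

lemma set_cols_ul_block_Suc:
  "set (cols (ul_block A i (Suc j))) =
    insert (vec i (\<lambda>a. A $$ (a, j))) (set (cols (ul_block A i j)))"
proof -
  have "set (cols (ul_block A i m)) = (\<lambda>b. vec i (\<lambda>a. A $$ (a, b))) ` {0..<m}" for m
  proof -
    have "col (ul_block A i m) b = vec i (\<lambda>a. A $$ (a, b))" if "b < m" for b
      using that by (intro eq_vecI) auto
    then show ?thesis unfolding cols_def by (auto simp: image_iff)
  qed
  then show ?thesis by (simp add: atLeast0_lessThan_Suc)
qed

lemma block_rank_Suc_col:
  "block_rank A i (Suc j) = block_rank A i j +
     (if vec i (\<lambda>a. A $$ (a, j)) \<in> vec_space.col_space i (ul_block A i j) then 0 else 1)"
  by (rule vec_space.rank_insert_col[OF ul_block_carrier ul_block_carrier _ set_cols_ul_block_Suc])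
    simp

lemma block_rank_Suc_col_le: "block_rank A i (Suc j) \<le> block_rank A i j + 1"
  using block_rank_Suc_col[where A = A and i = i and j = j] by simp

lemma block_rank_le_Suc_col: "block_rank A i j \<le> block_rank A i (Suc j)"
  using block_rank_Suc_col[where A = A and i = i and j = j] by simp

lemma block_rank_Suc_row_le:
  assumes "Suc i \<le> dim_row A" "j \<le> dim_col A"
  shows "block_rank A (Suc i) j \<le> block_rank A i j + 1"
  using block_rank_Suc_col_le[where A = "A\<^sup>T" and i = j and j = i]
    block_rank_transpose[of "Suc i" A j] block_rank_transpose[of i A j] assms by simp

lemma block_rank_le_Suc_row:
  assumes "Suc i \<le> dim_row A" "j \<le> dim_col A"
  shows "block_rank A i j \<le> block_rank A (Suc i) j"
  using block_rank_le_Suc_col[where A = "A\<^sup>T" and i = j and j = i]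
    block_rank_transpose[of "Suc i" A j] block_rank_transpose[of i A j] assms by simp

lemma eq_uminus_self_iff:
  fixes a :: "'a::field_char_0"
  shows "a = - a \<longleftrightarrow> a = 0"
proof
  assume "a = - a"
  then have "2 * a = 0" by (metis mult_2 add.right_inverse)
  then show "a = 0" by simp
qed simp

lemma skew_quadratic_form_zero:
  fixes M :: "'a::field_char_0 mat"
  assumes M: "M \<in> carrier_mat q q" "M\<^sup>T = - M" and x: "x \<in> carrier_vec q"
  shows "(M *\<^sub>v x) \<bullet> x = 0"
proof -
  have "(M *\<^sub>v x) \<bullet> x = x \<bullet> (M *\<^sub>v x)" by (rule comm_scalar_prod) (use M x in auto)
  also have "\<dots> = (M\<^sup>T *\<^sub>v x) \<bullet> x" using transpose_vec_mult_scalar[OF M(1) x x] by simp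
  also have "\<dots> = - ((M *\<^sub>v x) \<bullet> x)" using M x by simp
  finally show ?thesis using eq_uminus_self_iff by blast
qed

lemma skew_entry:
  assumes "M \<in> carrier_mat n n" "M\<^sup>T = - M" "a < n" "b < n"
  shows "M $$ (b, a) = - M $$ (a, b)"
  using arg_cong[OF assms(2), of "\<lambda>A. A $$ (a, b)"] assms(1,3,4) by simp

lemma skew_diag_zero:
  fixes M :: "'a::field_char_0 mat"
  assumes "M \<in> carrier_mat n n" "M\<^sup>T = - M" "a < n"
  shows "M $$ (a, a) = 0"
  using skew_entry[OF assms(1,2,3,3)] eq_uminus_self_iff by blast

lemma skew_ul_block:
  assumes "M \<in> carrier_mat n n" "M\<^sup>T = - M" "q \<le> n"
  shows "(ul_block M q q)\<^sup>T = - ul_block M q q"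
  using transpose_ul_block[of q M q] ul_block_uminus[of q M q] assms by simp

lemma skew_col_in_col_space_iff:
  fixes M :: "'a::field_char_0 mat"
  assumes M: "M \<in> carrier_mat n n" "M\<^sup>T = - M" and q: "q < n"
  shows "vec (Suc q) (\<lambda>a. M $$ (a, q)) \<in> vec_space.col_space (Suc q) (ul_block M (Suc q) q)
     \<longleftrightarrow> vec q (\<lambda>a. M $$ (a, q)) \<in> vec_space.col_space q (ul_block M q q)"
proof -
  let ?w = "vec (Suc q) (\<lambda>a. M $$ (a, q))" and ?v = "vec q (\<lambda>a. M $$ (a, q))"
  let ?N = "ul_block M (Suc q) q" and ?B = "ul_block M q q"
  have upper: "(?N *\<^sub>v x) $ a = (?B *\<^sub>v x) $ a" if "x \<in> carrier_vec q" "a < q" for x a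
    using that by (simp add: ul_block_mult_vec_index del: index_mult_mat_vec)
  have "row ?N q = - ?v"
  proof (rule eq_vecI)
    fix b assume "b < dim_vec (- ?v)"
    then show "row ?N q $ b = (- ?v) $ b" using skew_entry[OF M _ q, of b] q by simp
  qed simp
  then have last: "(?N *\<^sub>v x) $ q = - (?v \<bullet> x)" if "x \<in> carrier_vec q" for x
    using that by simp
  have "(\<exists>x\<in>carrier_vec q. ?N *\<^sub>v x = ?w) \<longleftrightarrow> (\<exists>x\<in>carrier_vec q. ?B *\<^sub>v x = ?v)"
  proof
    assume "\<exists>x\<in>carrier_vec q. ?N *\<^sub>v x = ?w"
    then obtain x where x: "x \<in> carrier_vec q" "?N *\<^sub>v x = ?w" by blast
    have "?B *\<^sub>v x = ?v"
    proof (rule eq_vecI)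
      fix a assume "a < dim_vec ?v"
      then show "(?B *\<^sub>v x) $ a = ?v $ a" using upper[OF x(1), of a] x(2) by simp
    qed simp
    with x(1) show "\<exists>x\<in>carrier_vec q. ?B *\<^sub>v x = ?v" by blast
  next
    assume "\<exists>x\<in>carrier_vec q. ?B *\<^sub>v x = ?v"
    then obtain x where x: "x \<in> carrier_vec q" "?B *\<^sub>v x = ?v" by blast
    have "?v \<bullet> x = 0"
      using skew_quadratic_form_zero[OF _ skew_ul_block[OF M less_imp_le[OF q]] x(1)] x(2) by simp
    then have "?N *\<^sub>v x = ?w" using upper[OF x(1)] last[OF x(1)] x(2) skew_diag_zero[OF M q]
      by (intro eq_vecI) (auto simp: less_Suc_eq)
    with x(1) show "\<exists>x\<in>carrier_vec q. ?N *\<^sub>v x = ?w" by blast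
  qed
  then show ?thesis by (simp add: vec_space.col_space_eq[OF ul_block_carrier])
qed

lemma skew_block_rank_even:
  fixes M :: "'a::field_char_0 mat"
  assumes M: "M \<in> carrier_mat n n" "M\<^sup>T = - M"
  shows "p \<le> n \<Longrightarrow> even (block_rank M p p)"
proof (induction p)
  case 0
  show ?case by simp
next
  case (Suc q)
  then have q: "q < n" by simp
  define d :: nat
    where "d = (if vec q (\<lambda>a. M $$ (a, q)) \<in> vec_space.col_space q (ul_block M q q) then 0 else 1)"
  have "block_rank M q (Suc q) = block_rank M q q + d"
    unfolding d_def by (rule block_rank_Suc_col)
  moreover have "block_rank M (Suc q) (Suc q) = block_rank M (Suc q) q + d"
    unfolding d_def using block_rank_Suc_col[where A = M and i = "Suc q" and j = q]
      skew_col_in_col_space_iff[OF M q] by simp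
  moreover have "block_rank M (Suc q) q = block_rank M q (Suc q)"
    by (rule block_rank_swap) (use M q in auto)
  ultimately have "block_rank M (Suc q) (Suc q) = block_rank M q q + 2 * d" by simp
  with Suc q show ?case by simp
qed

section \<open>The rank function of an involution\<close>

definition corner_count :: "(nat \<Rightarrow> nat) \<Rightarrow> nat \<Rightarrow> nat \<Rightarrow> nat" where
  "corner_count z i j = card {k \<in> {1..i}. z k \<le> j}"

lemma cols_ul_block_permutation_matrix:
  fixes z :: "nat \<Rightarrow> nat" and N n j :: nat
  defines "P \<equiv> ul_block
      (mat N N (\<lambda>(a, b). if z (a + 1) = b + 1 then 1 else 0 :: 'a::zero_neq_one)) n j"
    and "E \<equiv> (\<lambda>k. unit_vec n (k - 1)) ` {k \<in> {1..n}. z k \<le> j}"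
  assumes z: "z permutes {1..N}" and n: "n \<le> N" and j: "j \<le> N"
  shows "E \<subseteq> set (cols P)" "set (cols P) \<subseteq> insert (0\<^sub>v n) E"
proof -
  have inj_z: "inj z" using permutes_inj[OF z] .
  have col_P: "col P b = vec n (\<lambda>a. if z (a + 1) = b + 1 then 1 else 0)" if "b < j" for b
    unfolding P_def using that n j by (intro eq_vecI) auto
  show "E \<subseteq> set (cols P)"
  proof
    fix u assume "u \<in> E"
    then obtain k where k: "k \<in> {1..n}" "z k \<le> j" "u = unit_vec n (k - 1)" unfolding E_def by blast
    have "z k \<in> {1..N}" using permutes_in_image[OF z] k(1) n by simp
    with k have "z k - 1 < j" by auto
    then have col_eq: "col P (z k - 1) = vec n (\<lambda>a. if z (a + 1) = z k then 1 else 0)"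
      using col_P \<open>z k \<in> {1..N}\<close> by simp
    have "z (a + 1) = z k \<longleftrightarrow> a = k - 1" for a
      using inj_eq[OF inj_z, of "a + 1" k] k(1) by auto
    then have "u = col P (z k - 1)" unfolding col_eq k(3) unit_vec_def by simp
    with \<open>z k - 1 < j\<close> show "u \<in> set (cols P)" by (auto simp: cols_def P_def)
  qed
  show "set (cols P) \<subseteq> insert (0\<^sub>v n) E"
  proof
    fix c assume "c \<in> set (cols P)"
    then obtain b where b: "b < j" "c = col P b" by (auto simp: cols_def P_def)
    show "c \<in> insert (0\<^sub>v n) E"
    proof (cases "\<exists>a<n. z (a + 1) = b + 1")
      case True
      then obtain a where a: "a < n" "z (a + 1) = b + 1" by blast
      then have "z (a' + 1) = b + 1 \<longleftrightarrow> a' = a" for a'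
        using inj_eq[OF inj_z, of "a' + 1" "a + 1"] by auto
      then have "c = unit_vec n (a + 1 - 1)" using col_P[OF b(1)] a b(2) by (intro eq_vecI) auto
      moreover have "a + 1 \<in> {k \<in> {1..n}. z k \<le> j}" using a b by auto
      ultimately show ?thesis unfolding E_def by blast
    next
      case False
      then have "c = 0\<^sub>v n" using col_P[OF b(1)] b(2) by (intro eq_vecI) auto
      then show ?thesis by blast
    qed
  qed
qed

lemma block_rank_perm_mat:
  assumes z: "z permutes {1..N}" and "i \<le> N" "j \<le> N"
  shows "block_rank (perm_mat N z) i j = corner_count z i j"
proof -
  let ?E = "(\<lambda>k. unit_vec i (k - 1) :: complex vec) ` {k \<in> {1..i}. z k \<le> j}"
  have "?E \<subseteq> set (unit_vecs i)" unfolding unit_vecs_def by force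
  then have "block_rank (perm_mat N z) i j = card ?E"
    unfolding perm_mat_def
    by (rule vec_space.rank_eq_card_unit_vecs[OF ul_block_carrier _
          cols_ul_block_permutation_matrix[OF assms]])
  also have "\<dots> = corner_count z i j"
    unfolding corner_count_def by (rule card_image) (auto simp: inj_on_def)
  finally show ?thesis .
qed

lemma involutions_involutive: "z \<in> involutions n \<Longrightarrow> z (z k) = k"
  unfolding involutions_def by blast

lemma involutions_permutes: "z \<in> involutions n \<Longrightarrow> z permutes {1..n}"
  unfolding involutions_def by blast

lemma involutions_pos:
  assumes z: "z \<in> involutions n" and k: "0 < k"
  shows "0 < z k"
proof (rule ccontr)
  assume "\<not> 0 < z k"
  then have "k = z 0" using involutions_involutive[OF z, of k] by simp
  also have "z 0 = 0" using permutes_not_in[OF involutions_permutes[OF z]] by simp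
  finally show False using k by simp
qed

lemma corner_count_Suc_row:
  "corner_count z (Suc i) j = corner_count z i j + (if z (Suc i) \<le> j then 1 else 0)"
proof (cases "z (Suc i) \<le> j")
  case True
  then have "{k \<in> {1..Suc i}. z k \<le> j} = insert (Suc i) {k \<in> {1..i}. z k \<le> j}"
    by (auto simp: le_Suc_eq)
  with True show ?thesis unfolding corner_count_def by simp
next
  case False
  then have "{k \<in> {1..Suc i}. z k \<le> j} = {k \<in> {1..i}. z k \<le> j}"
    by (auto simp: le_Suc_eq)
  with False show ?thesis unfolding corner_count_def by simp
qed

lemma corner_count_Suc_col:
  assumes z: "z \<in> involutions n"
  shows "corner_count z i (Suc j) = corner_count z i j + (if z (Suc j) \<le> i then 1 else 0)"
proof -
  have preimage: "z k = Suc j \<longleftrightarrow> k = z (Suc j)" for k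
    using involutions_involutive[OF z] by metis
  show ?thesis
  proof (cases "z (Suc j) \<le> i")
    case True
    moreover have "0 < z (Suc j)" using involutions_pos[OF z] by simp
    ultimately have "{k \<in> {1..i}. z k \<le> Suc j} = insert (z (Suc j)) {k \<in> {1..i}. z k \<le> j}"
      using preimage by (auto simp: le_Suc_eq)
    moreover have "z (Suc j) \<notin> {k \<in> {1..i}. z k \<le> j}"
      using involutions_involutive[OF z] by simp
    ultimately show ?thesis using True unfolding corner_count_def by simp
  next
    case False
    then have "{k \<in> {1..i}. z k \<le> Suc j} = {k \<in> {1..i}. z k \<le> j}"
      using preimage by (auto simp: le_Suc_eq)
    with False show ?thesis unfolding corner_count_def by simp
  qed
qed

lemma corner_count_swap:
  assumes z: "z \<in> involutions n"
  shows "corner_count z j i = corner_count z i j"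
proof -
  have "bij_betw z {k \<in> {1..i}. z k \<le> j} {k \<in> {1..j}. z k \<le> i}"
    by (rule bij_betw_byWitness[where f' = z])
      (use involutions_involutive[OF z] involutions_pos[OF z] in \<open>auto simp: Suc_le_eq\<close>)
  then show ?thesis unfolding corner_count_def by (simp add: bij_betw_same_card)
qed

lemma even_card_if_fixpoint_free_involution:
  assumes "finite S"
    and "\<And>x. x \<in> S \<Longrightarrow> f x \<in> S" "\<And>x. x \<in> S \<Longrightarrow> f (f x) = x" "\<And>x. x \<in> S \<Longrightarrow> f x \<noteq> x"
  shows "even (card S)"
  using assms
proof (induction S rule: finite_psubset_induct)
  case (psubset S)
  show ?case
  proof (cases "S = {}")
    case False
    then obtain x where x: "x \<in> S" by blast
    let ?T = "S - {x, f x}"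
    have even_T: "even (card ?T)"
    proof (rule psubset.IH)
      show "?T \<subset> S" using x by blast
    next
      fix y assume "y \<in> ?T"
      then have y: "y \<in> S" "y \<noteq> x" "y \<noteq> f x" by auto
      then show "f (f y) = y" "f y \<noteq> y" using psubset.prems(2,3) by blast+
      have "f y \<noteq> x" using y(3) psubset.prems(2)[OF y(1)] by auto
      moreover have "f y \<noteq> f x" using y(2) psubset.prems(2)[OF y(1)] psubset.prems(2)[OF x] by metis
      ultimately show "f y \<in> ?T" using psubset.prems(1)[OF y(1)] by blast
    qed
    have sub: "{x, f x} \<subseteq> S" using x psubset.prems(1) by blast
    have "card {x, f x} = 2" using psubset.prems(3)[OF x] by simp
    then have "card ?T = card S - 2" "2 \<le> card S"
      using card_Diff_subset[OF _ sub] card_mono[OF psubset.hyps sub] by simp_all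
    with even_T show ?thesis by presburger
  qed simp
qed

lemma corner_count_diag_even:
  assumes z: "z \<in> fpf_involutions n" and i: "i \<le> n"
  shows "even (corner_count z i i)"
proof -
  have inv: "z \<in> involutions n" and fpf: "\<forall>k\<in>{1..n}. z k \<noteq> k"
    using z unfolding fpf_involutions_def by auto
  show ?thesis unfolding corner_count_def
    by (rule even_card_if_fixpoint_free_involution[where f = z])
      (use involutions_involutive[OF inv] involutions_pos[OF inv] fpf i in \<open>auto simp: Suc_le_eq\<close>)
qed

section \<open>Diagrams and essential sets\<close>

lemma diagram_eq:
  assumes z: "z \<in> involutions n"
  shows "{(i, z j) |i j. i \<in> {1..n} \<and> j \<in> {1..n} \<and> z j < z i \<and> R (z j) i \<and> i < j}
       = {(i, c). i \<in> {1..n} \<and> c \<in> {1..n} \<and> c < z i \<and> R c i \<and> i < z c}"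
proof -
  have range: "k \<in> {1..n} \<Longrightarrow> z k \<in> {1..n}" for k
    using permutes_in_image[OF involutions_permutes[OF z]] by simp
  show ?thesis
  proof (intro equalityI subsetI)
    fix p assume "p \<in> {(i, z j) |i j. i \<in> {1..n} \<and> j \<in> {1..n} \<and> z j < z i \<and> R (z j) i \<and> i < j}"
    then show "p \<in> {(i, c). i \<in> {1..n} \<and> c \<in> {1..n} \<and> c < z i \<and> R c i \<and> i < z c}"
      using range involutions_involutive[OF z] by auto
  next
    fix p assume "p \<in> {(i, c). i \<in> {1..n} \<and> c \<in> {1..n} \<and> c < z i \<and> R c i \<and> i < z c}"
    then obtain i c where "p = (i, c)" "i \<in> {1..n}" "c \<in> {1..n}" "c < z i" "R c i" "i < z c"
      by blast
    then show "p \<in> {(i, z j) |i j. i \<in> {1..n} \<and> j \<in> {1..n} \<and> z j < z i \<and> R (z j) i \<and> i < j}"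
      using range[of c] involutions_involutive[OF z, of c]
      by (intro CollectI exI[of _ i] exI[of _ "z c"]) auto
  qed
qed

lemma D_O_eq:
  "z \<in> involutions n \<Longrightarrow> D_O n z = {(i, c). i \<in> {1..n} \<and> c \<in> {1..n} \<and> c < z i \<and> c \<le> i \<and> i < z c}"
  unfolding D_O_def using diagram_eq[of z n "(\<le>)"] by simp

lemma D_Sp_eq:
  "z \<in> involutions n \<Longrightarrow> D_Sp n z = {(i, c). i \<in> {1..n} \<and> c \<in> {1..n} \<and> c < z i \<and> c < i \<and> i < z c}"
  unfolding D_Sp_def using diagram_eq[of z n "(<)"] by simp

lemma Ess_induct [consumes 2, case_names Ess right down]:
  assumes "finite D" "(i, j) \<in> D"
    and Ess: "\<And>i j. (i, j) \<in> Ess D \<Longrightarrow> P i j"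
    and right: "\<And>i j. (i, j) \<in> D \<Longrightarrow> (i, Suc j) \<in> D \<Longrightarrow> P i (Suc j) \<Longrightarrow> P i j"
    and down: "\<And>i j. (i, j) \<in> D \<Longrightarrow> (Suc i, j) \<in> D \<Longrightarrow> P (Suc i) j \<Longrightarrow> P i j"
  shows "P i j"
proof -
  obtain N where N: "\<And>a b. (a, b) \<in> D \<Longrightarrow> a + b \<le> N"
    using finite_nat_set_iff_bounded_le[THEN iffD1,
        OF finite_imageI[OF \<open>finite D\<close>, of "\<lambda>(a, b). a + b"]]
    by fastforce
  have "(i, j) \<in> D \<Longrightarrow> P i j" for i j
  proof (induction "N - (i + j)" arbitrary: i j rule: less_induct)
    case less
    show ?case
    proof (cases "(i, j) \<in> Ess D")
      case True
      then show ?thesis by (rule Ess)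
    next
      case False
      then consider "(i, Suc j) \<in> D" | "(Suc i, j) \<in> D" using less.prems unfolding Ess_def by auto
      then show ?thesis
      proof cases
        case 1
        then have "P i (Suc j)" using N[OF 1] by (intro less.hyps) auto
        with less.prems 1 show ?thesis by (rule right)
      next
        case 2
        then have "P (Suc i) j" using N[OF 2] by (intro less.hyps) auto
        with less.prems 2 show ?thesis by (rule down)
      qed
    qed
  qed
  then show ?thesis using \<open>(i, j) \<in> D\<close> .
qed

lemma block_rank_le_on_diagram:
  assumes A: "A \<in> carrier_mat n n" and z: "z \<in> involutions n"
    and D: "D \<subseteq> {(i, j). i \<in> {1..n} \<and> j \<in> {1..n} \<and> j < z i \<and> i < z j}"
    and bound: "\<forall>(i, j)\<in>Ess D. block_rank A i j \<le> corner_count z i j"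
    and ij: "(i, j) \<in> D"
  shows "block_rank A i j \<le> corner_count z i j"
proof -
  have "finite D" by (rule finite_subset[OF D]) (auto intro: finite_subset[of _ "{1..n} \<times> {1..n}"])
  from this ij show ?thesis
  proof (induction rule: Ess_induct)
    case (Ess i j)
    then show ?case using bound by blast
  next
    case (right i j)
    then have "i < z (Suc j)" using D by auto
    then have "corner_count z i (Suc j) = corner_count z i j"
      using corner_count_Suc_col[OF z] by simp
    with right(3) show ?case using block_rank_le_Suc_col[where A = A and i = i and j = j] by simp
  next
    case (down i j)
    then have "j < z (Suc i)" "Suc i \<le> n" "j \<le> n" using D by auto
    then have "corner_count z (Suc i) j = corner_count z i j"
      and "block_rank A i j \<le> block_rank A (Suc i) j"
      using corner_count_Suc_row[of z i j] block_rank_le_Suc_row[of i A j] A by simp_all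
    with down(3) show ?case by simp
  qed
qed

lemma block_rank_le_corner_count_Suc_row:
  assumes A: "A \<in> carrier_mat n n" and "Suc i \<le> n" "j \<le> n" "z (Suc i) \<le> j"
    and "block_rank A i j \<le> corner_count z i j"
  shows "block_rank A (Suc i) j \<le> corner_count z (Suc i) j"
  using block_rank_Suc_row_le[of i A j] corner_count_Suc_row[of z i j] assms by simp

lemma block_rank_le_corner_count_Suc_col:
  assumes z: "z \<in> involutions n" and "z (Suc j) \<le> i"
    and "block_rank A i j \<le> corner_count z i j"
  shows "block_rank A i (Suc j) \<le> corner_count z i (Suc j)"
  using block_rank_Suc_col_le[where A = A and i = i and j = j] corner_count_Suc_col[OF z, of i j]
    assms by simp

lemma block_rank_le_corner_count:
  assumes A: "A \<in> Mat_K K n" and z: "z \<in> involutions n"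
    and below: "\<And>i j. (i, j) \<in> D_Sp n z \<Longrightarrow> block_rank A i j \<le> corner_count z i j"
    and diag: "\<And>i. Suc i \<le> n \<Longrightarrow> Suc i < z (Suc i) \<Longrightarrow>
      block_rank A (Suc i) i \<le> corner_count z (Suc i) i \<Longrightarrow>
      block_rank A (Suc i) (Suc i) \<le> corner_count z (Suc i) (Suc i)"
  shows "i \<le> n \<Longrightarrow> j \<le> n \<Longrightarrow> block_rank A i j \<le> corner_count z i j"
proof (induction "i + j" arbitrary: i j rule: less_induct)
  case less
  have A_carrier: "A \<in> carrier_mat n n" and sym: "A\<^sup>T = A \<or> A\<^sup>T = - A"
    using A unfolding Mat_K_def by (auto split: ktype.splits)
  show ?case
  proof (cases "i = 0 \<or> j = 0")
    case True
    then show ?thesis by auto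
  next
    case False
    then obtain i' j' where i: "i = Suc i'" and j: "j = Suc j'" by (meson not0_implies_Suc)
    consider (row) "z i \<le> j" | (col) "z j \<le> i" | (region) "j < z i" "i < z j" by linarith
    then show ?thesis
    proof cases
      case row
      then show ?thesis using block_rank_le_corner_count_Suc_row[OF A_carrier, of i' j z]
        less.hyps[of i' j] less.prems i by simp
    next
      case col
      then show ?thesis using block_rank_le_corner_count_Suc_col[OF z, of j' i A]
        less.hyps[of i j'] less.prems j by simp
    next
      case region
      consider (lower) "j < i" | (upper) "i < j" | (diagonal) "i = j" by linarith
      then show ?thesis
      proof cases
        case lower
        with region less.prems i j show ?thesis by (intro below) (simp add: D_Sp_eq[OF z])
      next
        case upper
        with region less.prems i j have "block_rank A j i \<le> corner_count z j i"
          by (intro below) (simp add: D_Sp_eq[OF z])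
        then show ?thesis
          using block_rank_swap[OF A_carrier sym] corner_count_swap[OF z] less.prems by simp
      next
        case diagonal
        have "block_rank A (Suc i') i' \<le> corner_count z (Suc i') i'"
          using less.hyps[of "Suc i'" i'] less.prems i j diagonal by simp
        then show ?thesis using diag[of i'] region less.prems i j diagonal by simp
      qed
    qed
  qed
qed

lemma skew_diag_bound:
  assumes A: "A \<in> Mat_K KSp n" and z: "z \<in> fpf_involutions n"
    and i: "Suc i \<le> n" and above: "Suc i < z (Suc i)"
    and bound: "block_rank A (Suc i) i \<le> corner_count z (Suc i) i"
  shows "block_rank A (Suc i) (Suc i) \<le> corner_count z (Suc i) (Suc i)"
proof -
  have "z \<in> involutions n" using z unfolding fpf_involutions_def by blast
  then have "corner_count z (Suc i) (Suc i) = corner_count z (Suc i) i"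
    using corner_count_Suc_col above by simp
  with bound block_rank_Suc_col_le[where A = A and i = "Suc i" and j = i]
  have "block_rank A (Suc i) (Suc i) \<le> corner_count z (Suc i) (Suc i) + 1" by simp
  moreover have "even (block_rank A (Suc i) (Suc i))"
    using skew_block_rank_even[of A n "Suc i"] A i unfolding Mat_K_def by simp
  moreover have "even (corner_count z (Suc i) (Suc i))" by (rule corner_count_diag_even[OF z i])
  ultimately show ?thesis by (auto simp: le_Suc_eq)
qed

lemma crank_ul_sub:
  "i \<le> dim_row A \<Longrightarrow> j \<le> dim_col A \<Longrightarrow> crank (ul_sub A i j) = block_rank A i j"
  unfolding crank_def by (simp add: ul_sub_eq_ul_block)

lemma MX_eq_Ess_bounds:
  assumes z: "z \<in> involutions n"
    and D: "D \<subseteq> {(i, j). i \<in> {1..n} \<and> j \<in> {1..n} \<and> j < z i \<and> i < z j}"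
    and complete: "\<And>A. A \<in> Mat_K K n \<Longrightarrow> \<forall>(i, j)\<in>D. block_rank A i j \<le> corner_count z i j \<Longrightarrow>
      \<forall>i\<le>n. \<forall>j\<le>n. block_rank A i j \<le> corner_count z i j"
  shows "MX K n z = {A \<in> Mat_K K n. \<forall>(i, j)\<in>Ess D.
    crank (ul_sub A i j) \<le> crank (ul_sub (perm_mat n z) i j)}"
proof -
  have bound_iff: "crank (ul_sub A i j) \<le> crank (ul_sub (perm_mat n z) i j)
      \<longleftrightarrow> block_rank A i j \<le> corner_count z i j"
    if "A \<in> Mat_K K n" "i \<le> n" "j \<le> n" for A i j
  proof -
    have "A \<in> carrier_mat n n" using that(1) unfolding Mat_K_def by blast
    then show ?thesis
      using that(2,3) crank_ul_sub[of i A j] crank_ul_sub[of i "perm_mat n z" j]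
        block_rank_perm_mat[OF involutions_permutes[OF z], of i j]
      by (simp add: perm_mat_def)
  qed
  have Ess_box: "Ess D \<subseteq> {1..n} \<times> {1..n}" using D unfolding Ess_def by auto
  show ?thesis
  proof (intro equalityI subsetI)
    fix A assume "A \<in> MX K n z"
    with Ess_box show "A \<in> {A \<in> Mat_K K n. \<forall>(i, j)\<in>Ess D.
        crank (ul_sub A i j) \<le> crank (ul_sub (perm_mat n z) i j)}"
      unfolding MX_def by fastforce
  next
    fix A assume "A \<in> {A \<in> Mat_K K n. \<forall>(i, j)\<in>Ess D.
        crank (ul_sub A i j) \<le> crank (ul_sub (perm_mat n z) i j)}"
    then have A: "A \<in> Mat_K K n"
      and Ess: "\<forall>(i, j)\<in>Ess D. block_rank A i j \<le> corner_count z i j"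
      using Ess_box bound_iff by fastforce+
    have "A \<in> carrier_mat n n" using A unfolding Mat_K_def by blast
    then have "\<forall>(i, j)\<in>D. block_rank A i j \<le> corner_count z i j"
      using block_rank_le_on_diagram[OF _ z D Ess] by blast
    then have "\<forall>i\<le>n. \<forall>j\<le>n. block_rank A i j \<le> corner_count z i j" by (rule complete[OF A])
    with A show "A \<in> MX K n z" unfolding MX_def using bound_iff by auto
  qed
qed

lemma MX_eq_Ess_D_O:
  assumes z: "z \<in> involutions n"
  shows "MX K n z = {A \<in> Mat_K K n. \<forall>(i, j)\<in>Ess (D_O n z).
    crank (ul_sub A i j) \<le> crank (ul_sub (perm_mat n z) i j)}"
proof (rule MX_eq_Ess_bounds[OF z])
  show "D_O n z \<subseteq> {(i, j). i \<in> {1..n} \<and> j \<in> {1..n} \<and> j < z i \<and> i < z j}"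
    unfolding D_O_eq[OF z] by auto
  fix A assume A: "A \<in> Mat_K K n"
    and D: "\<forall>(i, j)\<in>D_O n z. block_rank A i j \<le> corner_count z i j"
  have "block_rank A i j \<le> corner_count z i j" if "i \<le> n" "j \<le> n" for i j
  proof (rule block_rank_le_corner_count[OF A z _ _ that])
    show "block_rank A i j \<le> corner_count z i j" if "(i, j) \<in> D_Sp n z" for i j
      using D that unfolding D_O_eq[OF z] D_Sp_eq[OF z] by auto
    show "block_rank A (Suc i) (Suc i) \<le> corner_count z (Suc i) (Suc i)"
      if "Suc i \<le> n" "Suc i < z (Suc i)" for i
      using D that unfolding D_O_eq[OF z] by auto
  qed
  then show "\<forall>i\<le>n. \<forall>j\<le>n. block_rank A i j \<le> corner_count z i j" by blast
qed

lemma MX_KSp_eq_Ess_D_Sp: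
  assumes z: "z \<in> fpf_involutions n"
  shows "MX KSp n z = {A \<in> Mat_K KSp n. \<forall>(i, j)\<in>Ess (D_Sp n z).
    crank (ul_sub A i j) \<le> crank (ul_sub (perm_mat n z) i j)}"
proof -
  have inv: "z \<in> involutions n" using z unfolding fpf_involutions_def by blast
  show ?thesis
  proof (rule MX_eq_Ess_bounds[OF inv])
    show "D_Sp n z \<subseteq> {(i, j). i \<in> {1..n} \<and> j \<in> {1..n} \<and> j < z i \<and> i < z j}"
      unfolding D_Sp_eq[OF inv] by auto
    fix A assume A: "A \<in> Mat_K KSp n"
      and D: "\<forall>(i, j)\<in>D_Sp n z. block_rank A i j \<le> corner_count z i j"
    have "block_rank A i j \<le> corner_count z i j" if "i \<le> n" "j \<le> n" for i j
      using block_rank_le_corner_count[OF A inv _ skew_diag_bound[OF A z] that] D by blast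
    then show "\<forall>i\<le>n. \<forall>j\<le>n. block_rank A i j \<le> corner_count z i j" by blast
  qed
qed

theorem proposition2p16:
  shows "(\<forall>K n z. z \<in> involutions n \<longrightarrow>
            MX K n z = {A \<in> Mat_K K n. \<forall>(i,j)\<in>Ess (D_O n z).
               crank (ul_sub A i j) \<le> crank (ul_sub (perm_mat n z) i j)})
       \<and> (\<forall>n z. even n \<longrightarrow> z \<in> fpf_involutions n \<longrightarrow>
            MX KSp n z = {A \<in> Mat_K KSp n. \<forall>(i,j)\<in>Ess (D_Sp n z).
               crank (ul_sub A i j) \<le> crank (ul_sub (perm_mat n z) i j)})"
  using MX_eq_Ess_D_O MX_KSp_eq_Ess_D_Sp by blast

end
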